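(* Let $(\Omega,\mathcal{F},P_0)$ be a complete probability space, $\epsilon\in(0,1)$, $\mathcal{C}\subseteq\mathcal{F}$ a sub-$\sigma$-algebra, and $\rho$ a sublinear operator on $L^{2+\epsilon}_{\mathcal{F}}(\Omega,P_0)$ with representation set $\mathcal{P}$, satisfying the standing assumptions below. If $\xi\in L^{4+2\epsilon}_{\mathcal{F}}(\Omega,P_0)$ and $\rho$ is stable, then there exists $\hat\eta\in L^{2+\epsilon}_{\mathcal{C}}(\Omega,P_0)$ such that $$\rho\big((\xi-\hat\eta)^2\big)=\inf_{\eta\in L^{2+\epsilon}_{\mathcal{C}}(P_0)}\rho\big((\xi-\eta)^2\big).$$
   Context: A sublinear operator is a map $\rho:L^{2+\epsilon}_{\mathcal{F}}(\Omega,P_0)\to\mathbb{R}$ that is monotone, constant preserving, sub-additive and positively homogeneous. Its representation set $\mathcal{P}$ is the family of all linear expectations (identified with probability measures $P$) dominated by $\rho$, so $\rho(\xi)=\max_{P\in\mathcal{P}}E_P[\xi]$; for $\xi\in L^{4+2\epsilon}$, $\eta\in L^{2+\epsilon}$, $\rho((\xi-\eta)^2)$ means $\sup_{P\in\mathcal{P}}E_P[(\xi-\eta)^2]$. Write $f^P=dP/dP_0$, $\mathcal{D}=\{f^P:P\in\mathcal{P}\}$. Standing assumptions: every $P\in\mathcal{P}$ is equivalent to $P_0$; $\mathcal{D}$ is norm-bounded in $L^{1+\frac{2}{\epsilon}}_{\mathcal{F}}(P_0)$ and $\sigma(L^{1+\frac{2}{\epsilon}}(P_0),L^{1+\frac{\epsilon}{2}}(P_0))$-compact.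 $\rho$ is stable if for each $P\in\mathcal{P}$ the random variable $f^P/E_{P_0}[f^P\mid\mathcal{C}]$ lies in $\mathcal{D}$. $L^{2+\epsilon}_{\mathcal{C}}(P_0)$ denotes the $\mathcal{C}$-measurable elements of $L^{2+\epsilon}(P_0)$. *)

theory Defs
  imports "HOL-Probability.Probability"
begin

definition Lp :: "'a measure \<Rightarrow> real \<Rightarrow> ('a \<Rightarrow> real) set" where
  "Lp M p = {f. f \<in> borel_measurable M \<and> integrable M (\<lambda>x. \<bar>f x\<bar> powr p)}"

definition Lp_sub :: "'a measure \<Rightarrow> 'a measure \<Rightarrow> real \<Rightarrow> ('a \<Rightarrow> real) set" where
  "Lp_sub M C p = {f. f \<in> Lp M p \<and> f \<in> borel_measurable C}"

definition sublinear_operator :: "'a measure \<Rightarrow> real \<Rightarrow> (('a \<Rightarrow> real) \<Rightarrow> real) \<Rightarrow> bool" where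
  "sublinear_operator M p \<rho> \<longleftrightarrow>
     (\<forall>\<xi>\<in>Lp M p. \<forall>\<eta>\<in>Lp M p. (AE x in M. \<xi> x \<le> \<eta> x) \<longrightarrow> \<rho> \<xi> \<le> \<rho> \<eta>) \<and>
     (\<forall>c. \<rho> (\<lambda>_. c) = c) \<and>
     (\<forall>\<xi>\<in>Lp M p. \<forall>\<eta>\<in>Lp M p. \<rho> (\<lambda>x. \<xi> x + \<eta> x) \<le> \<rho> \<xi> + \<rho> \<eta>) \<and>
     (\<forall>\<xi>\<in>Lp M p. \<forall>c::real. c \<ge> 0 \<longrightarrow> \<rho> (\<lambda>x. c * \<xi> x) = c * \<rho> \<xi>)"

definition rep_set :: "'a measure \<Rightarrow> real \<Rightarrow> (('a \<Rightarrow> real) \<Rightarrow> real) \<Rightarrow> 'a measure set" where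
  "rep_set M p \<rho> = {P. prob_space P \<and> sets P = sets M \<and>
      (\<forall>\<xi>\<in>Lp M p. integrable P \<xi> \<and> (\<integral>x. \<xi> x \<partial>P) \<le> \<rho> \<xi>)}"

definition dens :: "'a measure \<Rightarrow> 'a measure \<Rightarrow> 'a \<Rightarrow> real" where
  "dens M P = (\<lambda>x. enn2real (RN_deriv M P x))"

text \<open>rho((xi - eta)^2) := sup over P in the representation set of E_P[(xi - eta)^2].\<close>
definition rho_sq :: "'a measure set \<Rightarrow> ('a \<Rightarrow> real) \<Rightarrow> ('a \<Rightarrow> real) \<Rightarrow> real" where
  "rho_sq \<P> \<xi> \<eta> = (SUP P\<in>\<P>. \<integral>x. (\<xi> x - \<eta> x)\<^sup>2 \<partial>P)"

definition weak_Lp_topology :: "'a measure \<Rightarrow> real \<Rightarrow> real \<Rightarrow> ('a \<Rightarrow> real) topology" where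
  "weak_Lp_topology M q r = topology_generated_by
     {{f \<in> Lp M q. (\<integral>x. f x * g x \<partial>M) \<in> U} | g U. g \<in> Lp M r \<and> open U}"

definition stable :: "'a measure \<Rightarrow> 'a measure \<Rightarrow> 'a measure set \<Rightarrow> bool" where
  "stable M C \<P> \<longleftrightarrow> (\<forall>P\<in>\<P>. \<exists>Q\<in>\<P>.
      AE x in M. dens M Q x = dens M P x / real_cond_exp M C (dens M P) x)"

end

theory Submission
  imports Defs
begin

text \<open>
  For P in the representation set let risk P \<eta> = E_P[(\<xi> - \<eta>)^2], and let min_risk P be its
  infimum over the C-measurable \<eta>.  Stability makes each of these problems explicitly solvable:
  with g = E_P0[f^P | C] and Q the member of the representation set with density f^P / g, the
  C-measurable m = E_Q[\<xi> | C] satisfies the Pythagorean identity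
  risk P \<eta> = risk P m + E_P0[g (m - \<eta>)^2].
  As an infimum of weakly continuous functionals of f^P, min_risk is upper semicontinuous and so
  attains its maximum at some P' on the weakly compact set of densities.  The representation set
  is convex, and comparing P' with the mixtures (1 - t) P' + t P as t tends to 0 shows
  risk P a \<le> risk P' a for the centre a of P'.  Thus (P', a) is a saddle point, and a minimises
  \<rho>((\<xi> - \<eta>)^2) = sup_P risk P \<eta>.
\<close>

lemma abs_powr_le_one_plus_powr:
  fixes x s t :: real
  assumes "0 < s" "s \<le> t"
  shows "\<bar>x\<bar> powr s \<le> 1 + \<bar>x\<bar> powr t"
proof (cases "\<bar>x\<bar> \<le> 1")
  case True
  then have "\<bar>x\<bar> powr s \<le> 1" using assms by (simp add: powr_le1)
  then show ?thesis by (smt (verit) powr_ge_zero)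
next
  case False
  then have "\<bar>x\<bar> powr s \<le> \<bar>x\<bar> powr t" using assms by (intro powr_mono) auto
  then show ?thesis by simp
qed

lemma Lp_mono:
  assumes "finite_measure M" "0 < s" "s \<le> t" "f \<in> Lp M t"
  shows "f \<in> Lp M s"
proof -
  interpret finite_measure M by fact
  have [measurable]: "f \<in> borel_measurable M" and int: "integrable M (\<lambda>x. \<bar>f x\<bar> powr t)"
    using assms(4) by (auto simp: Lp_def)
  have "integrable M (\<lambda>x. \<bar>f x\<bar> powr s)"
    by (rule Bochner_Integration.integrable_bound[where f="\<lambda>x. 1 + \<bar>f x\<bar> powr t"])
       (use int abs_powr_le_one_plus_powr[OF assms(2,3)] in auto)
  then show ?thesis by (simp add: Lp_def)
qed

lemma abs_diff_powr_le:
  fixes a b p :: real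
  assumes "0 \<le> p"
  shows "\<bar>a - b\<bar> powr p \<le> 2 powr p * (\<bar>a\<bar> powr p + \<bar>b\<bar> powr p)"
proof -
  have "\<bar>a - b\<bar> powr p \<le> (2 * max \<bar>a\<bar> \<bar>b\<bar>) powr p"
    using assms by (intro powr_mono2) auto
  also have "\<dots> = 2 powr p * max \<bar>a\<bar> \<bar>b\<bar> powr p" by (simp add: powr_mult)
  also have "max \<bar>a\<bar> \<bar>b\<bar> powr p \<le> \<bar>a\<bar> powr p + \<bar>b\<bar> powr p"
    by (cases "\<bar>a\<bar> \<le> \<bar>b\<bar>") (auto simp: max_def)
  finally show ?thesis by (simp add: mult_left_mono)
qed

lemma Lp_diff:
  assumes "0 \<le> p" "f \<in> Lp M p" "g \<in> Lp M p"
  shows "(\<lambda>x. f x - g x) \<in> Lp M p"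
proof -
  have [measurable]: "f \<in> borel_measurable M" "g \<in> borel_measurable M"
    and int: "integrable M (\<lambda>x. \<bar>f x\<bar> powr p)" "integrable M (\<lambda>x. \<bar>g x\<bar> powr p)"
    using assms by (auto simp: Lp_def)
  have "integrable M (\<lambda>x. \<bar>f x - g x\<bar> powr p)"
    by (rule Bochner_Integration.integrable_bound
        [where f="\<lambda>x. 2 powr p * (\<bar>f x\<bar> powr p + \<bar>g x\<bar> powr p)"])
       (use int abs_diff_powr_le[OF assms(1)] in auto)
  then show ?thesis by (simp add: Lp_def)
qed

lemma Lp_const:
  assumes "finite_measure M"
  shows "(\<lambda>x. c) \<in> Lp M p"
proof -
  interpret finite_measure M by fact
  show ?thesis by (simp add: Lp_def)
qed

lemma Lp_mult:
  assumes "0 < p" "f \<in> Lp M p" "g \<in> Lp M p"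
  shows "(\<lambda>x. f x * g x) \<in> Lp M (p / 2)"
proof -
  have [measurable]: "f \<in> borel_measurable M" "g \<in> borel_measurable M"
    and int: "integrable M (\<lambda>x. \<bar>f x\<bar> powr p)" "integrable M (\<lambda>x. \<bar>g x\<bar> powr p)"
    using assms by (auto simp: Lp_def)
  have bound: "\<bar>f x * g x\<bar> powr (p / 2) \<le> \<bar>f x\<bar> powr p + \<bar>g x\<bar> powr p" for x
  proof -
    have sq: "(\<bar>y\<bar> powr (p / 2))\<^sup>2 = \<bar>y\<bar> powr p" for y :: real
      unfolding power2_eq_square powr_add[symmetric] by simp
    have "\<bar>f x * g x\<bar> powr (p / 2) = \<bar>f x\<bar> powr (p / 2) * \<bar>g x\<bar> powr (p / 2)"
      by (simp add: abs_mult powr_mult)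
    also have "\<dots> \<le> (\<bar>f x\<bar> powr (p / 2))\<^sup>2 + (\<bar>g x\<bar> powr (p / 2))\<^sup>2"
      using sum_squares_bound[of "\<bar>f x\<bar> powr (p / 2)" "\<bar>g x\<bar> powr (p / 2)"]
        mult_nonneg_nonneg[OF powr_ge_zero powr_ge_zero, of "\<bar>f x\<bar>" "p / 2" "\<bar>g x\<bar>" "p / 2"]
      by linarith
    finally show ?thesis unfolding sq .
  qed
  have "integrable M (\<lambda>x. \<bar>f x * g x\<bar> powr (p / 2))"
    by (rule Bochner_Integration.integrable_bound
        [where f="\<lambda>x. \<bar>f x\<bar> powr p + \<bar>g x\<bar> powr p"]) (use int bound in auto)
  then show ?thesis by (simp add: Lp_def)
qed

lemma Lp_abs_powr:
  assumes "0 < p" "f \<in> Lp M t"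
  shows "(\<lambda>x. \<bar>f x\<bar> powr p) \<in> Lp M (t / p)"
proof -
  have [measurable]: "f \<in> borel_measurable M" and "integrable M (\<lambda>x. \<bar>f x\<bar> powr t)"
    using assms by (auto simp: Lp_def)
  moreover have "\<bar>\<bar>f x\<bar> powr p\<bar> powr (t / p) = \<bar>f x\<bar> powr t" for x
    using assms by (simp add: powr_powr)
  ultimately show ?thesis by (simp add: Lp_def)
qed

lemma
  assumes "1 < q" "1 < r" "1 / q + 1 / r = 1" "f \<in> Lp M q" "h \<in> Lp M r"
  shows integrable_mult_conjugate_Lp: "integrable M (\<lambda>x. f x * h x)"
    and integral_mult_le_conjugate_Lp:
      "(\<integral>x. f x * h x \<partial>M) \<le> (\<integral>x. \<bar>f x\<bar> powr q \<partial>M) / q + (\<integral>x. \<bar>h x\<bar> powr r \<partial>M) / r"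
proof -
  have [measurable]: "f \<in> borel_measurable M" "h \<in> borel_measurable M"
    and int: "integrable M (\<lambda>x. \<bar>f x\<bar> powr q)" "integrable M (\<lambda>x. \<bar>h x\<bar> powr r)"
    using assms by (auto simp: Lp_def)
  have Young: "\<bar>f x * h x\<bar> \<le> \<bar>f x\<bar> powr q / q + \<bar>h x\<bar> powr r / r" for x
    using Youngs_inequality[OF assms(1-3), of "\<bar>f x\<bar>" "\<bar>h x\<bar>"] by (simp add: abs_mult)
  show fh: "integrable M (\<lambda>x. f x * h x)"
    by (rule Bochner_Integration.integrable_bound
        [where f="\<lambda>x. \<bar>f x\<bar> powr q / q + \<bar>h x\<bar> powr r / r"])
       (use int Young in \<open>auto intro: order_trans[OF _ abs_ge_self]\<close>)
  have "(\<integral>x. f x * h x \<partial>M) \<le> (\<integral>x. \<bar>f x\<bar> powr q / q + \<bar>h x\<bar> powr r / r \<partial>M)"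
    by (rule integral_mono[OF fh]) (use int Young in \<open>auto intro: order_trans[OF abs_ge_self]\<close>)
  also have "\<dots> = (\<integral>x. \<bar>f x\<bar> powr q \<partial>M) / q + (\<integral>x. \<bar>h x\<bar> powr r \<partial>M) / r"
    using int by simp
  finally show "(\<integral>x. f x * h x \<partial>M) \<le> (\<integral>x. \<bar>f x\<bar> powr q \<partial>M) / q + (\<integral>x. \<bar>h x\<bar> powr r \<partial>M) / r" .
qed

lemma convex_on_abs_powr:
  fixes p :: real
  assumes "1 \<le> p"
  shows "convex_on UNIV (\<lambda>x::real. \<bar>x\<bar> powr p)"
proof (rule convex_onI)
  fix t x y :: real
  assume t: "0 < t" "t < 1"
  have powr_mix: "((1 - t) * a + t * b) powr p \<le> (1 - t) * a powr p + t * b powr p"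
    if a: "0 \<le> a" and b: "0 \<le> b" for a b :: real
  proof -
    have scale: "(s * c) powr p \<le> s * c powr p" if "0 \<le> s" "s \<le> 1" "0 \<le> c" for s c :: real
    proof -
      have "s powr p \<le> s" using that assms powr_le_one_le[of s p] by (cases "s = 0") auto
      then have "s powr p * c powr p \<le> s * c powr p" by (rule mult_right_mono) simp
      then show ?thesis using that by (simp add: powr_mult)
    qed
    consider "a = 0" | "b = 0" | "0 < a" "0 < b" using a b by linarith
    then show ?thesis
    proof cases
      case 1
      then show ?thesis using scale[of t b] t b by simp
    next
      case 2
      then show ?thesis using scale[of "1 - t" a] t a by simp
    next
      case 3
      then show ?thesis using convex_onD[OF powr_convex[OF assms], of t a b] t by simp
    qed
  qed
  have "\<bar>(1 - t) *\<^sub>R x + t *\<^sub>R y\<bar> powr p \<le> ((1 - t) * \<bar>x\<bar> + t * \<bar>y\<bar>) powr p"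
    using t assms
    by (intro powr_mono2) (auto intro: order_trans[OF abs_triangle_ineq] simp: abs_mult)
  also have "\<dots> \<le> (1 - t) * \<bar>x\<bar> powr p + t * \<bar>y\<bar> powr p"
    by (rule powr_mix) auto
  finally show "\<bar>(1 - t) *\<^sub>R x + t *\<^sub>R y\<bar> powr p \<le> (1 - t) * \<bar>x\<bar> powr p + t * \<bar>y\<bar> powr p" .
qed auto

lemma dens_nonneg: "0 \<le> dens M P x"
  unfolding dens_def by simp

lemma dens_measurable [measurable]: "dens M P \<in> borel_measurable M"
  unfolding dens_def by measurable

lemma density_dens:
  assumes "sigma_finite_measure M" "sigma_finite_measure P" "sets P = sets M"
    and "absolutely_continuous M P"
  shows "P = density M (\<lambda>x. ennreal (dens M P x))"
proof -
  interpret M: sigma_finite_measure M by fact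
  have finite: "AE x in M. RN_deriv M P x \<noteq> \<infinity>"
    by (rule M.RN_deriv_finite) (use assms in auto)
  have "P = density M (RN_deriv M P)"
    using M.density_RN_deriv[OF assms(4,3)] by simp
  also have "\<dots> = density M (\<lambda>x. ennreal (dens M P x))"
    by (rule density_cong) (use finite in \<open>auto simp: dens_def ennreal_enn2real_if\<close>)
  finally show ?thesis .
qed

lemma
  fixes f1 f2 h :: "'a \<Rightarrow> real"
  assumes [measurable]: "f1 \<in> borel_measurable M" "f2 \<in> borel_measurable M" "h \<in> borel_measurable M"
    and nonneg: "\<And>x. 0 \<le> f1 x" "\<And>x. 0 \<le> f2 x" and t: "0 \<le> t" "t \<le> 1"
    and int: "integrable (density M (\<lambda>x. ennreal (f1 x))) h"
      "integrable (density M (\<lambda>x. ennreal (f2 x))) h"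
  shows integrable_density_mixture:
      "integrable (density M (\<lambda>x. ennreal ((1 - t) * f1 x + t * f2 x))) h"
    and integral_density_mixture:
      "integral\<^sup>L (density M (\<lambda>x. ennreal ((1 - t) * f1 x + t * f2 x))) h =
        (1 - t) * integral\<^sup>L (density M (\<lambda>x. ennreal (f1 x))) h +
        t * integral\<^sup>L (density M (\<lambda>x. ennreal (f2 x))) h"
proof -
  have mix_nonneg: "0 \<le> (1 - t) * f1 x + t * f2 x" for x
    using nonneg t by simp
  have int_M: "integrable M (\<lambda>x. f1 x * h x)" "integrable M (\<lambda>x. f2 x * h x)"
    using int integrable_density[of h M f1] integrable_density[of h M f2] nonneg by simp_all
  have split: "(\<lambda>x. ((1 - t) * f1 x + t * f2 x) * h x) =
      (\<lambda>x. (1 - t) * (f1 x * h x) + t * (f2 x * h x))"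
    by (auto simp: algebra_simps)
  show "integrable (density M (\<lambda>x. ennreal ((1 - t) * f1 x + t * f2 x))) h"
    using integrable_density[of h M "\<lambda>x. (1 - t) * f1 x + t * f2 x"] int_M mix_nonneg
    by (simp add: split)
  have "integral\<^sup>L (density M (\<lambda>x. ennreal ((1 - t) * f1 x + t * f2 x))) h =
      (\<integral>x. ((1 - t) * f1 x + t * f2 x) * h x \<partial>M)"
    using integral_density[of h M "\<lambda>x. (1 - t) * f1 x + t * f2 x"] mix_nonneg by simp
  also have "\<dots> = (1 - t) * (\<integral>x. f1 x * h x \<partial>M) + t * (\<integral>x. f2 x * h x \<partial>M)"
    using int_M by (simp add: split)
  also have "\<dots> = (1 - t) * integral\<^sup>L (density M (\<lambda>x. ennreal (f1 x))) h +
      t * integral\<^sup>L (density M (\<lambda>x. ennreal (f2 x))) h"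
    using integral_density[of h M f1] integral_density[of h M f2] nonneg by simp
  finally show "integral\<^sup>L (density M (\<lambda>x. ennreal ((1 - t) * f1 x + t * f2 x))) h =
      (1 - t) * integral\<^sup>L (density M (\<lambda>x. ennreal (f1 x))) h +
      t * integral\<^sup>L (density M (\<lambda>x. ennreal (f2 x))) h" .
qed

lemma density_mixture_in_rep_set:
  fixes f1 f2 :: "'a \<Rightarrow> real"
  assumes "density M (\<lambda>x. ennreal (f1 x)) \<in> rep_set M p \<rho>"
    and "density M (\<lambda>x. ennreal (f2 x)) \<in> rep_set M p \<rho>"
    and [measurable]: "f1 \<in> borel_measurable M" "f2 \<in> borel_measurable M"
    and nonneg: "\<And>x. 0 \<le> f1 x" "\<And>x. 0 \<le> f2 x" and t: "0 \<le> t" "t \<le> 1"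
  shows "density M (\<lambda>x. ennreal ((1 - t) * f1 x + t * f2 x)) \<in> rep_set M p \<rho>"
proof -
  let ?P1 = "density M (\<lambda>x. ennreal (f1 x))" and ?P2 = "density M (\<lambda>x. ennreal (f2 x))"
  let ?P = "density M (\<lambda>x. ennreal ((1 - t) * f1 x + t * f2 x))"
  interpret P1: prob_space ?P1 using assms(1) by (simp add: rep_set_def)
  interpret P2: prob_space ?P2 using assms(2) by (simp add: rep_set_def)
  have emeasure_space: "emeasure (density M (\<lambda>x. ennreal (f x))) (space M) = (\<integral>\<^sup>+x. ennreal (f x) \<partial>M)"
    if [measurable]: "f \<in> borel_measurable M" for f :: "'a \<Rightarrow> real"
    by (subst emeasure_density) (auto intro!: nn_integral_cong)
  have "prob_space ?P"
  proof
    have "emeasure ?P (space M) = (\<integral>\<^sup>+x. ennreal ((1 - t) * f1 x + t * f2 x) \<partial>M)"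
      by (rule emeasure_space) simp
    also have "\<dots> = (\<integral>\<^sup>+x. ennreal (1 - t) * ennreal (f1 x) + ennreal t * ennreal (f2 x) \<partial>M)"
      using nonneg t by (intro nn_integral_cong) (simp add: ennreal_plus ennreal_mult)
    also have "\<dots> = ennreal (1 - t) * emeasure ?P1 (space M) + ennreal t * emeasure ?P2 (space M)"
      by (simp add: emeasure_space nn_integral_add nn_integral_cmult)
    also have "\<dots> = ennreal (1 - t) + ennreal t"
      using P1.emeasure_space_1 P2.emeasure_space_1 by simp
    also have "\<dots> = 1"
      using t by (simp flip: ennreal_plus)
    finally show "emeasure ?P (space ?P) = 1" by simp
  qed
  moreover have "integrable ?P \<zeta> \<and> (\<integral>x. \<zeta> x \<partial>?P) \<le> \<rho> \<zeta>" if "\<zeta> \<in> Lp M p" for \<zeta>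
  proof -
    have [measurable]: "\<zeta> \<in> borel_measurable M" using that by (simp add: Lp_def)
    have P1: "integrable ?P1 \<zeta>" "(\<integral>x. \<zeta> x \<partial>?P1) \<le> \<rho> \<zeta>"
      and P2: "integrable ?P2 \<zeta>" "(\<integral>x. \<zeta> x \<partial>?P2) \<le> \<rho> \<zeta>"
      using assms(1,2) that by (auto simp: rep_set_def)
    have "(\<integral>x. \<zeta> x \<partial>?P) = (1 - t) * (\<integral>x. \<zeta> x \<partial>?P1) + t * (\<integral>x. \<zeta> x \<partial>?P2)"
      by (rule integral_density_mixture) (use P1 P2 nonneg t in auto)
    also have "\<dots> \<le> (1 - t) * \<rho> \<zeta> + t * \<rho> \<zeta>"
      using P1 P2 t by (intro add_mono mult_left_mono) auto
    finally have "(\<integral>x. \<zeta> x \<partial>?P) \<le> \<rho> \<zeta>" by (simp add: algebra_simps)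
    moreover have "integrable ?P \<zeta>"
      by (rule integrable_density_mixture) (use P1 P2 nonneg t in auto)
    ultimately show ?thesis by simp
  qed
  ultimately show ?thesis by (simp add: rep_set_def)
qed

text \<open>
  t * mixture_weight t a b * (x - y)^2 is the minimum over z of (1 - t) a (x - z)^2 + t b (y - z)^2.
\<close>
definition mixture_weight :: "real \<Rightarrow> real \<Rightarrow> real \<Rightarrow> real" where
  "mixture_weight t a b = (1 - t) * a * b / ((1 - t) * a + t * b)"

lemma mixture_weight_bounds:
  assumes "0 < a" "0 \<le> b" "0 \<le> t" "t < 1"
  shows "0 \<le> mixture_weight t a b" "mixture_weight t a b \<le> b"
proof -
  have pos: "0 < (1 - t) * a + t * b" using assms by (simp add: add_pos_nonneg)
  then show "0 \<le> mixture_weight t a b" unfolding mixture_weight_def using assms by simp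
  have "(1 - t) * a * b \<le> b * ((1 - t) * a + t * b)"
    using mult_nonneg_nonneg[of t "b * b"] assms by (simp add: algebra_simps)
  then show "mixture_weight t a b \<le> b" unfolding mixture_weight_def using pos
    by (simp add: divide_le_eq)
qed

lemma mixture_weight_sq_le:
  fixes x y :: real
  assumes "0 < a" "0 \<le> b" "0 < t" "t < 1"
  shows "t * mixture_weight t a b * (x - y)\<^sup>2 \<le> (1 - t) * a * x\<^sup>2 + t * b * y\<^sup>2"
proof -
  define \<alpha> \<beta> where "\<alpha> = (1 - t) * a" and "\<beta> = t * b"
  have "0 \<le> \<alpha>" "0 \<le> \<beta>" "0 < \<alpha> + \<beta>"
    using assms by (auto simp: \<alpha>_def \<beta>_def add_pos_nonneg)
  have "(\<alpha> + \<beta>) * (\<alpha> * x\<^sup>2 + \<beta> * y\<^sup>2) - \<alpha> * \<beta> * (x - y)\<^sup>2 = (\<alpha> * x + \<beta> * y)\<^sup>2"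
    by (simp add: power2_eq_square algebra_simps)
  then have "\<alpha> * \<beta> * (x - y)\<^sup>2 \<le> (\<alpha> + \<beta>) * (\<alpha> * x\<^sup>2 + \<beta> * y\<^sup>2)"
    using zero_le_power2[of "\<alpha> * x + \<beta> * y"] by linarith
  then have le: "\<alpha> * \<beta> / (\<alpha> + \<beta>) * (x - y)\<^sup>2 \<le> \<alpha> * x\<^sup>2 + \<beta> * y\<^sup>2"
    using \<open>0 < \<alpha> + \<beta>\<close> by (simp add: divide_le_eq mult.commute)
  have eq: "t * mixture_weight t a b = \<alpha> * \<beta> / (\<alpha> + \<beta>)"
    by (simp add: \<alpha>_def \<beta>_def mixture_weight_def)
  show ?thesis unfolding eq \<alpha>_def[symmetric] \<beta>_def[symmetric] by (rule le)
qed

lemma tendsto_mixture_weight: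
  assumes "0 < a" "(f \<longlongrightarrow> 0) F"
  shows "((\<lambda>n. mixture_weight (f n) a b) \<longlongrightarrow> b) F"
proof -
  have "((\<lambda>n. (1 - f n) * a * b / ((1 - f n) * a + f n * b)) \<longlongrightarrow>
      (1 - 0) * a * b / ((1 - 0) * a + 0 * b)) F"
    using assms by (intro tendsto_intros) auto
  then show ?thesis using assms(1) by (simp add: mixture_weight_def)
qed

lemma integrable_mixture_weight:
  fixes g1 g2 D :: "'a \<Rightarrow> real"
  assumes [measurable]: "g1 \<in> borel_measurable M" "g2 \<in> borel_measurable M" "D \<in> borel_measurable M"
    and pos: "AE x in M. 0 < g1 x" "AE x in M. 0 \<le> g2 x" and D: "\<And>x. 0 \<le> D x"
    and int: "integrable M (\<lambda>x. g2 x * D x)" and t: "0 \<le> t" "t < 1"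
  shows "integrable M (\<lambda>x. mixture_weight t (g1 x) (g2 x) * D x)"
proof (rule Bochner_Integration.integrable_bound[OF int])
  show "(\<lambda>x. mixture_weight t (g1 x) (g2 x) * D x) \<in> borel_measurable M"
    unfolding mixture_weight_def by measurable
  show "AE x in M. norm (mixture_weight t (g1 x) (g2 x) * D x) \<le> norm (g2 x * D x)"
    using pos
  proof eventually_elim
    case (elim x)
    then show ?case
      using mixture_weight_bounds[OF elim t] D[of x] by (simp add: abs_mult mult_right_mono)
  qed
qed

lemma integral_mixture_weight_le:
  fixes g1 g2 u v :: "'a \<Rightarrow> real"
  assumes [measurable]: "g1 \<in> borel_measurable M" "g2 \<in> borel_measurable M"
      "u \<in> borel_measurable M" "v \<in> borel_measurable M"
    and pos: "AE x in M. 0 < g1 x" "AE x in M. 0 < g2 x"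
    and int: "integrable M (\<lambda>x. g1 x * (u x)\<^sup>2)" "integrable M (\<lambda>x. g2 x * (v x)\<^sup>2)"
      "integrable M (\<lambda>x. mixture_weight t (g1 x) (g2 x) * (u x - v x)\<^sup>2)"
    and t: "0 < t" "t < 1"
  shows "t * (\<integral>x. mixture_weight t (g1 x) (g2 x) * (u x - v x)\<^sup>2 \<partial>M) \<le>
    (1 - t) * (\<integral>x. g1 x * (u x)\<^sup>2 \<partial>M) + t * (\<integral>x. g2 x * (v x)\<^sup>2 \<partial>M)"
proof -
  have "(\<integral>x. t * (mixture_weight t (g1 x) (g2 x) * (u x - v x)\<^sup>2) \<partial>M) \<le>
      (\<integral>x. (1 - t) * (g1 x * (u x)\<^sup>2) + t * (g2 x * (v x)\<^sup>2) \<partial>M)"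
  proof (rule integral_mono_AE)
    show "AE x in M. t * (mixture_weight t (g1 x) (g2 x) * (u x - v x)\<^sup>2) \<le>
        (1 - t) * (g1 x * (u x)\<^sup>2) + t * (g2 x * (v x)\<^sup>2)"
      using pos
    proof eventually_elim
      case (elim x)
      show ?case
        using mixture_weight_sq_le[OF elim(1) less_imp_le[OF elim(2)] t, of "u x" "v x"]
        by (simp add: mult.assoc)
    qed
  qed (use int in simp_all)
  then show ?thesis using int by simp
qed

lemma tendsto_integral_mixture_weight:
  fixes g1 g2 D :: "'a \<Rightarrow> real"
  assumes [measurable]: "g1 \<in> borel_measurable M" "g2 \<in> borel_measurable M" "D \<in> borel_measurable M"
    and "AE x in M. 0 < g1 x" "AE x in M. 0 \<le> g2 x" "\<And>x. 0 \<le> D x"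
    and "integrable M (\<lambda>x. g2 x * D x)"
  shows "((\<lambda>t. \<integral>x. mixture_weight t (g1 x) (g2 x) * D x \<partial>M) \<longlongrightarrow> (\<integral>x. g2 x * D x \<partial>M))
    (at_right 0)"
proof (rule tendsto_at_right_sequentially[of 0 1])
  fix S :: "nat \<Rightarrow> real"
  assume S: "\<And>n. 0 < S n" "\<And>n. S n < 1" "S \<longlonglongrightarrow> 0"
  show "(\<lambda>n. \<integral>x. mixture_weight (S n) (g1 x) (g2 x) * D x \<partial>M) \<longlonglongrightarrow> (\<integral>x. g2 x * D x \<partial>M)"
  proof (rule integral_dominated_convergence[where w="\<lambda>x. g2 x * D x"])
    show "(\<lambda>x. mixture_weight (S n) (g1 x) (g2 x) * D x) \<in> borel_measurable M" for n
      unfolding mixture_weight_def by measurable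
    show "AE x in M. norm (mixture_weight (S n) (g1 x) (g2 x) * D x) \<le> g2 x * D x" for n
      using assms(4,5)
    proof eventually_elim
      case (elim x)
      then show ?case
        using mixture_weight_bounds[of "g1 x" "g2 x" "S n"] S(1,2)[of n] assms(6)[of x]
        by (simp add: abs_mult mult_right_mono less_imp_le)
    qed
    show "AE x in M. (\<lambda>n. mixture_weight (S n) (g1 x) (g2 x) * D x) \<longlonglongrightarrow> g2 x * D x"
      using assms(4) by eventually_elim (intro tendsto_mult_right tendsto_mixture_weight S(3))
  qed (use assms in auto)
qed simp

lemma compactin_image_attains_sup:
  fixes h :: "'b \<Rightarrow> real"
  assumes "compactin X (\<phi> ` A)" "A \<noteq> {}" "bdd_above (h ` A)"
    and "\<And>c. \<exists>U. openin X U \<and> (\<forall>a\<in>A. \<phi> a \<in> U \<longleftrightarrow> h a < c)"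
  shows "\<exists>a\<in>A. \<forall>b\<in>A. h b \<le> h a"
proof (rule ccontr)
  assume no_max: "\<not> ?thesis"
  define S where "S = (SUP a\<in>A. h a)"
  have below_S: "h a < S" if "a \<in> A" for a
  proof -
    have "\<not> (\<forall>b\<in>A. h b \<le> h a)" using no_max that by blast
    then obtain b where "b \<in> A" "\<not> h b \<le> h a" by blast
    then show ?thesis unfolding S_def using cSUP_upper[OF \<open>b \<in> A\<close> assms(3)] by simp
  qed
  obtain U where U: "\<And>c. openin X (U c)" "\<And>c a. a \<in> A \<Longrightarrow> \<phi> a \<in> U c \<longleftrightarrow> h a < c"
    using assms(4) by metis
  have "\<phi> ` A \<subseteq> \<Union> (U ` {..<S})"
  proof clarify
    fix a assume "a \<in> A"
    then obtain c where "h a < c" "c < S" using dense[OF below_S] by blast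
    then show "\<phi> a \<in> \<Union> (U ` {..<S})" using U(2)[OF \<open>a \<in> A\<close>] by blast
  qed
  then obtain F where F: "finite F" "F \<subseteq> U ` {..<S}" "\<phi> ` A \<subseteq> \<Union> F"
    using conjunct2[OF assms(1)[unfolded compactin_def], rule_format, of "U ` {..<S}"] U(1)
    by blast
  obtain C0 where C0: "C0 \<subseteq> {..<S}" "finite C0" "F = U ` C0"
    using finite_subset_image[OF F(1,2)] by blast
  have "C0 \<noteq> {}" using F(3) assms(2) unfolding C0(3) by auto
  have "h a < Max C0" if "a \<in> A" for a
  proof -
    have "\<phi> a \<in> \<Union> (U ` C0)" using F(3) that unfolding C0(3) by blast
    then obtain c where c: "c \<in> C0" "\<phi> a \<in> U c" by blast
    then have "h a < c" using U(2)[OF that] by blast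
    also have "c \<le> Max C0" using C0(2) c(1) by simp
    finally show ?thesis .
  qed
  then have "S \<le> Max C0"
    unfolding S_def using assms(2) by (intro cSUP_least) (auto intro: less_imp_le)
  moreover have "Max C0 < S" using Max_in[OF C0(2) \<open>C0 \<noteq> {}\<close>] C0(1) by auto
  ultimately show False by simp
qed

lemma openin_weak_Lp_topology:
  assumes "g \<in> Lp M r" "open V"
  shows "openin (weak_Lp_topology M q r) {f \<in> Lp M q. (\<integral>x. f x * g x \<partial>M) \<in> V}"
  unfolding weak_Lp_topology_def by (rule topology_generated_by_Basis) (use assms in blast)

lemma saddle_point_minimises_sup:
  fixes F :: "'p \<Rightarrow> 'e \<Rightarrow> real"
  assumes "p0 \<in> A" "e0 \<in> B"
    and saddle: "\<And>p. p \<in> A \<Longrightarrow> F p e0 \<le> F p0 e0" "\<And>e. e \<in> B \<Longrightarrow> F p0 e0 \<le> F p0 e"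
    and bdd: "\<And>e. e \<in> B \<Longrightarrow> bdd_above ((\<lambda>p. F p e) ` A)"
  shows "(SUP p\<in>A. F p e0) = (INF e\<in>B. SUP p\<in>A. F p e)"
proof -
  have sup_e0: "(SUP p\<in>A. F p e0) = F p0 e0"
  proof (rule antisym)
    show "(SUP p\<in>A. F p e0) \<le> F p0 e0" using assms(1) saddle(1) by (intro cSUP_least) auto
    show "F p0 e0 \<le> (SUP p\<in>A. F p e0)" by (rule cSUP_upper[OF assms(1) bdd[OF assms(2)]])
  qed
  have lower: "F p0 e0 \<le> (SUP p\<in>A. F p e)" if "e \<in> B" for e
    using saddle(2)[OF that] cSUP_upper[OF assms(1) bdd[OF that]] by linarith
  have "F p0 e0 \<le> (INF e\<in>B. SUP p\<in>A. F p e)"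
    using assms(2) lower by (intro cINF_greatest) auto
  moreover have "(INF e\<in>B. SUP p\<in>A. F p e) \<le> (SUP p\<in>A. F p e0)"
    by (rule cINF_lower[OF bdd_belowI2 assms(2)]) (rule lower)
  ultimately show ?thesis using sup_e0 by linarith
qed

locale sublinear_least_squares = prob_space M
  for M :: "'a measure" +
  fixes C :: "'a measure" and \<epsilon> :: real and \<rho> :: "('a \<Rightarrow> real) \<Rightarrow> real" and \<xi> :: "'a \<Rightarrow> real"
  assumes eps_pos: "0 < \<epsilon>" and eps_less_1: "\<epsilon> < 1"
    and subalgebra_C: "subalgebra M C"
    and expectation_attained:
      "\<forall>\<zeta>\<in>Lp M (2 + \<epsilon>). \<exists>P\<in>rep_set M (2 + \<epsilon>) \<rho>. (\<integral>x. \<zeta> x \<partial>P) = \<rho> \<zeta>"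
    and abs_continuous: "\<forall>P\<in>rep_set M (2 + \<epsilon>) \<rho>. absolutely_continuous M P"
    and dens_Lq: "\<forall>P\<in>rep_set M (2 + \<epsilon>) \<rho>. dens M P \<in> Lp M (1 + 2 / \<epsilon>)"
    and dens_Lq_bounded:
      "\<exists>B. \<forall>P\<in>rep_set M (2 + \<epsilon>) \<rho>. (\<integral>x. \<bar>dens M P x\<bar> powr (1 + 2 / \<epsilon>) \<partial>M) \<le> B"
    and dens_compact: "compactin (weak_Lp_topology M (1 + 2 / \<epsilon>) (1 + \<epsilon> / 2))
      (dens M ` rep_set M (2 + \<epsilon>) \<rho>)"
    and xi_L: "\<xi> \<in> Lp M (4 + 2 * \<epsilon>)"
    and stable: "stable M C (rep_set M (2 + \<epsilon>) \<rho>)"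
begin

abbreviation "Reps \<equiv> rep_set M (2 + \<epsilon>) \<rho>"
abbreviation "L \<equiv> Lp M (2 + \<epsilon>)"
abbreviation "L\<^sub>C \<equiv> Lp_sub M C (2 + \<epsilon>)"
abbreviation "q \<equiv> 1 + 2 / \<epsilon>"
abbreviation "r \<equiv> 1 + \<epsilon> / 2"

lemma conjugate_exponents: "1 < q" "1 < r" "1 / q + 1 / r = 1"
proof -
  show "1 < q" "1 < r" using eps_pos by auto
  have "1 / q = \<epsilon> / (\<epsilon> + 2)" "1 / r = 2 / (\<epsilon> + 2)" using eps_pos by (simp_all add: field_simps)
  then show "1 / q + 1 / r = 1" using eps_pos by (simp add: add_divide_distrib[symmetric])
qed

lemma xi_in_L: "\<xi> \<in> L"
  by (rule Lp_mono[OF finite_measure_axioms _ _ xi_L]) (use eps_pos in auto)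

lemma xi_measurable [measurable]: "\<xi> \<in> borel_measurable M"
  using xi_L by (simp add: Lp_def)

lemma L_measurable: "u \<in> L \<Longrightarrow> u \<in> borel_measurable M"
  by (simp add: Lp_def)

lemma L_diff: "u \<in> L \<Longrightarrow> v \<in> L \<Longrightarrow> (\<lambda>x. u x - v x) \<in> L"
  using Lp_diff[of "2 + \<epsilon>"] eps_pos by simp

lemma mult_in_Lr: "u \<in> L \<Longrightarrow> v \<in> L \<Longrightarrow> (\<lambda>x. u x * v x) \<in> Lp M r"
  using Lp_mult[of "2 + \<epsilon>" u M v] eps_pos by (simp add: add_divide_distrib)

lemma sq_diff_in_Lr: "\<eta> \<in> L \<Longrightarrow> (\<lambda>x. (\<xi> x - \<eta> x)\<^sup>2) \<in> Lp M r"
  using mult_in_Lr[OF L_diff[OF xi_in_L] L_diff[OF xi_in_L]] by (simp add: power2_eq_square)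

lemma measurable_C_imp_M: "h \<in> borel_measurable C \<Longrightarrow> h \<in> borel_measurable M"
  using measurable_from_subalg[OF subalgebra_C] by blast

lemma L\<^sub>C_D:
  assumes "\<eta> \<in> L\<^sub>C"
  shows "\<eta> \<in> L" "\<eta> \<in> borel_measurable C" "\<eta> \<in> borel_measurable M"
  using assms measurable_C_imp_M by (auto simp: Lp_sub_def)

lemma zero_in_L\<^sub>C: "(\<lambda>_. 0) \<in> L\<^sub>C"
  using Lp_const[OF finite_measure_axioms] by (simp add: Lp_sub_def)

lemma Reps_nonempty: "Reps \<noteq> {}"
  using expectation_attained Lp_const[OF finite_measure_axioms, of 0] by blast

lemma Reps_D:
  assumes "P \<in> Reps"
  shows "prob_space P" "sets P = sets M"
  using assms by (auto simp: rep_set_def)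

lemma measurable_Reps: "P \<in> Reps \<Longrightarrow> h \<in> borel_measurable M \<Longrightarrow> h \<in> borel_measurable P"
  using measurable_cong_sets[OF Reps_D(2) refl] by blast

lemma Reps_density: "P \<in> Reps \<Longrightarrow> P = density M (\<lambda>x. ennreal (dens M P x))"
  using density_dens[OF sigma_finite_measure_axioms prob_space_imp_sigma_finite] Reps_D
    abs_continuous by blast

lemma
  assumes "P \<in> Reps" and [measurable]: "h \<in> borel_measurable M"
  shows integral_Reps: "integral\<^sup>L P h = (\<integral>x. dens M P x * h x \<partial>M)"
    and integrable_Reps: "integrable P h \<longleftrightarrow> integrable M (\<lambda>x. dens M P x * h x)"
proof -
  let ?D = "density M (\<lambda>x. ennreal (dens M P x))"
  have "integral\<^sup>L P h = integral\<^sup>L ?D h" using Reps_density[OF assms(1)] by (rule arg_cong)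
  also have "\<dots> = (\<integral>x. dens M P x * h x \<partial>M)" by (simp add: integral_density dens_nonneg)
  finally show "integral\<^sup>L P h = (\<integral>x. dens M P x * h x \<partial>M)" .
  have "integrable P h = integrable ?D h" using Reps_density[OF assms(1)] by (rule arg_cong)
  also have "\<dots> = integrable M (\<lambda>x. dens M P x * h x)" by (simp add: integrable_density dens_nonneg)
  finally show "integrable P h \<longleftrightarrow> integrable M (\<lambda>x. dens M P x * h x)" .
qed

lemma
  assumes "P \<in> Reps"
  shows integrable_dens: "integrable M (dens M P)"
    and integral_dens: "(\<integral>x. dens M P x \<partial>M) = 1"
proof -
  interpret P: prob_space P using Reps_D(1)[OF assms] .
  show "integrable M (dens M P)" using integrable_Reps[OF assms, of "\<lambda>_. 1"] by simp
  show "(\<integral>x. dens M P x \<partial>M) = 1"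
    using integral_Reps[OF assms, of "\<lambda>_. 1"] by (simp add: P.prob_space)
qed

lemma dens_in_Lq: "P \<in> Reps \<Longrightarrow> dens M P \<in> Lp M q"
  using dens_Lq by blast

lemma integrable_dens_mult:
  assumes "P \<in> Reps" "u \<in> L" "v \<in> L"
  shows "integrable M (\<lambda>x. dens M P x * (u x * v x))"
  using integrable_mult_conjugate_Lp[OF conjugate_exponents dens_in_Lq[OF assms(1)]
      mult_in_Lr[OF assms(2,3)]] .

lemma integrable_dens_sq_diff:
  "P \<in> Reps \<Longrightarrow> \<eta> \<in> L \<Longrightarrow> integrable M (\<lambda>x. dens M P x * (\<xi> x - \<eta> x)\<^sup>2)"
  using integrable_dens_mult[OF _ L_diff[OF xi_in_L] L_diff[OF xi_in_L]]
  by (simp add: power2_eq_square)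

definition risk :: "'a measure \<Rightarrow> ('a \<Rightarrow> real) \<Rightarrow> real" where
  "risk P \<eta> = (\<integral>x. (\<xi> x - \<eta> x)\<^sup>2 \<partial>P)"

definition min_risk :: "'a measure \<Rightarrow> real" where
  "min_risk P = (INF \<eta>\<in>L\<^sub>C. risk P \<eta>)"

lemma rho_sq_eq_SUP_risk: "rho_sq Reps \<xi> \<eta> = (SUP P\<in>Reps. risk P \<eta>)"
  by (simp add: rho_sq_def risk_def)

lemma risk_nonneg: "0 \<le> risk P \<eta>"
  by (simp add: risk_def)

lemma risk_eq_integral_dens:
  assumes "P \<in> Reps" "\<eta> \<in> L"
  shows "risk P \<eta> = (\<integral>x. dens M P x * (\<xi> x - \<eta> x)\<^sup>2 \<partial>M)"
proof -
  have [measurable]: "\<eta> \<in> borel_measurable M" using assms(2) by (rule L_measurable)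
  show ?thesis unfolding risk_def by (rule integral_Reps[OF assms(1)]) measurable
qed

lemma risk_bdd_above:
  assumes "\<eta> \<in> L"
  shows "bdd_above ((\<lambda>P. risk P \<eta>) ` Reps)"
proof -
  obtain B where B: "\<forall>P\<in>Reps. (\<integral>x. \<bar>dens M P x\<bar> powr q \<partial>M) \<le> B"
    using dens_Lq_bounded by blast
  have "risk P \<eta> \<le> B / q + (\<integral>x. \<bar>(\<xi> x - \<eta> x)\<^sup>2\<bar> powr r \<partial>M) / r" if P: "P \<in> Reps" for P
  proof -
    have "risk P \<eta> \<le> (\<integral>x. \<bar>dens M P x\<bar> powr q \<partial>M) / q + (\<integral>x. \<bar>(\<xi> x - \<eta> x)\<^sup>2\<bar> powr r \<partial>M) / r"
      unfolding risk_eq_integral_dens[OF P assms]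
      by (rule integral_mult_le_conjugate_Lp[OF conjugate_exponents dens_in_Lq[OF P]
            sq_diff_in_Lr[OF assms]])
    also have "\<dots> \<le> B / q + (\<integral>x. \<bar>(\<xi> x - \<eta> x)\<^sup>2\<bar> powr r \<partial>M) / r"
      using B P conjugate_exponents by (simp add: divide_right_mono)
    finally show ?thesis .
  qed
  then show ?thesis by (rule bdd_aboveI2)
qed

lemma min_risk_le_risk: "\<eta> \<in> L\<^sub>C \<Longrightarrow> min_risk P \<le> risk P \<eta>"
  unfolding min_risk_def by (rule cINF_lower[OF bdd_belowI2[OF risk_nonneg]])

lemma min_risk_bdd_above: "bdd_above (min_risk ` Reps)"
proof -
  obtain K where K: "\<And>P. P \<in> Reps \<Longrightarrow> risk P (\<lambda>_. 0) \<le> K"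
    using risk_bdd_above[OF L\<^sub>C_D(1)[OF zero_in_L\<^sub>C]] by (auto simp: bdd_above_def)
  have "min_risk P \<le> K" if "P \<in> Reps" for P
    using min_risk_le_risk[OF zero_in_L\<^sub>C, of P] K[OF that] by linarith
  then show ?thesis by (rule bdd_aboveI2)
qed

lemma min_risk_attains_max: "\<exists>Ps\<in>Reps. \<forall>P\<in>Reps. min_risk P \<le> min_risk Ps"
proof (rule compactin_image_attains_sup[OF dens_compact Reps_nonempty min_risk_bdd_above])
  fix c :: real
  let ?U = "\<Union>\<eta>\<in>L\<^sub>C. {f \<in> Lp M q. (\<integral>x. f x * (\<xi> x - \<eta> x)\<^sup>2 \<partial>M) \<in> {..<c}}"
  have "openin (weak_Lp_topology M q r) ?U"
  proof (rule openin_Union, clarify)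
    fix \<eta> assume "\<eta> \<in> L\<^sub>C"
    show "openin (weak_Lp_topology M q r) {f \<in> Lp M q. (\<integral>x. f x * (\<xi> x - \<eta> x)\<^sup>2 \<partial>M) \<in> {..<c}}"
      by (rule openin_weak_Lp_topology[OF sq_diff_in_Lr[OF L\<^sub>C_D(1)[OF \<open>\<eta> \<in> L\<^sub>C\<close>]]]) simp
  qed
  moreover have "dens M P \<in> ?U \<longleftrightarrow> min_risk P < c" if P: "P \<in> Reps" for P
  proof -
    have "min_risk P < c \<longleftrightarrow> (\<exists>\<eta>\<in>L\<^sub>C. risk P \<eta> < c)"
      unfolding min_risk_def
      by (rule cINF_less_iff) (use zero_in_L\<^sub>C bdd_belowI2[OF risk_nonneg] in auto)
    then show ?thesis
      using dens_in_Lq[OF P] risk_eq_integral_dens[OF P L\<^sub>C_D(1)] by auto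
  qed
  ultimately show "\<exists>U. openin (weak_Lp_topology M q r) U \<and> (\<forall>P\<in>Reps. dens M P \<in> U \<longleftrightarrow> min_risk P < c)"
    by blast
qed

lemma sigma_finite_subalgebra_C: "sigma_finite_subalgebra M C"
  by (rule finite_measure_subalgebra_is_sigma_finite)
     (use subalgebra_C finite_measure_axioms in
      \<open>auto simp: finite_measure_subalgebra_def finite_measure_subalgebra_axioms_def\<close>)

lemma subalgebra_Reps: "P \<in> Reps \<Longrightarrow> subalgebra P C"
  using subalgebra_C Reps_D(2)[of P] by (auto simp: subalgebra_def dest: sets_eq_imp_space_eq)

lemma sigma_finite_subalgebra_Reps: "P \<in> Reps \<Longrightarrow> sigma_finite_subalgebra P C"
  using subalgebra_Reps[of P] Reps_D(1)[of P]
  by (intro finite_measure_subalgebra_is_sigma_finite)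
     (auto simp: finite_measure_subalgebra_def finite_measure_subalgebra_axioms_def prob_space_def)

definition cond_dens :: "'a measure \<Rightarrow> 'a \<Rightarrow> real" where
  "cond_dens P = real_cond_exp M C (dens M P)"

lemma cond_dens_measurable [measurable]: "cond_dens P \<in> borel_measurable C"
  unfolding cond_dens_def by simp

lemma cond_dens_measurable_M [measurable]: "cond_dens P \<in> borel_measurable M"
  by (rule measurable_C_imp_M) simp

lemma
  assumes [measurable]: "k \<in> borel_measurable C" and "integrable M (\<lambda>x. dens M P x * k x)"
  shows integrable_cond_dens_mult: "integrable M (\<lambda>x. cond_dens P x * k x)"
    and integral_cond_dens_mult: "(\<integral>x. cond_dens P x * k x \<partial>M) = (\<integral>x. dens M P x * k x \<partial>M)"
proof -
  interpret sigma_finite_subalgebra M C by (rule sigma_finite_subalgebra_C)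
  have "integrable M (\<lambda>x. k x * dens M P x)" using assms(2) by (simp add: mult.commute)
  from real_cond_exp_intg[OF this assms(1) dens_measurable]
  show "integrable M (\<lambda>x. cond_dens P x * k x)"
    and "(\<integral>x. cond_dens P x * k x \<partial>M) = (\<integral>x. dens M P x * k x \<partial>M)"
    by (simp_all add: cond_dens_def mult.commute)
qed

definition pythagorean_centre :: "'a measure \<Rightarrow> ('a \<Rightarrow> real) \<Rightarrow> ('a \<Rightarrow> real) \<Rightarrow> bool" where
  "pythagorean_centre P m g \<longleftrightarrow> m \<in> L\<^sub>C \<and> g \<in> borel_measurable M \<and> (AE x in M. 0 < g x) \<and>
     (\<forall>\<eta>\<in>L\<^sub>C. integrable M (\<lambda>x. g x * (m x - \<eta> x)\<^sup>2) \<and>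
        risk P \<eta> = risk P m + (\<integral>x. g x * (m x - \<eta> x)\<^sup>2 \<partial>M))"

context
  fixes P Q :: "'a measure"
  assumes P: "P \<in> Reps" and Q: "Q \<in> Reps"
    and dens_Q: "AE x in M. dens M Q x = dens M P x / cond_dens P x"
begin

lemma dens_stable_AE: "AE x in M. dens M Q x = inverse (cond_dens P x) * dens M P x"
  using dens_Q by eventually_elim (simp add: divide_inverse mult.commute)

lemma integrable_inverse_cond_dens_mult:
  "integrable M (\<lambda>x. inverse (cond_dens P x) * dens M P x)"
  by (rule integrable_cong_AE_imp[OF integrable_dens[OF Q]]) (use dens_stable_AE in auto)

text \<open>
  With the convention x / 0 = 0, the fact that f^P / E[f^P | C] integrates to 1 forces
  E[f^P | C] \<noteq> 0 almost everywhere.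
\<close>
lemma cond_dens_pos: "AE x in M. 0 < cond_dens P x"
proof -
  interpret sigma_finite_subalgebra M C by (rule sigma_finite_subalgebra_C)
  let ?g = "cond_dens P"
  have "prob {x \<in> space M. ?g x \<noteq> 0} = (\<integral>x. indicator {x \<in> space M. ?g x \<noteq> 0} x \<partial>M)"
    by (simp add: Int_absorb1[OF Collect_subset])
  also have "\<dots> = (\<integral>x. inverse (?g x) * ?g x \<partial>M)"
    by (rule Bochner_Integration.integral_cong) (auto simp: indicator_def)
  also have "\<dots> = (\<integral>x. inverse (?g x) * dens M P x \<partial>M)"
    unfolding cond_dens_def
    by (rule real_cond_exp_intg(2))
       (use integrable_inverse_cond_dens_mult in \<open>auto simp: cond_dens_def\<close>)
  also have "\<dots> = (\<integral>x. dens M Q x \<partial>M)"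
    by (rule integral_cong_AE) (use dens_stable_AE in auto)
  finally have "AE x in M. x \<in> {x \<in> space M. ?g x \<noteq> 0}"
    using integral_dens[OF Q] by (intro AE_prob_1) simp
  moreover have "AE x in M. 0 \<le> ?g x"
    unfolding cond_dens_def by (rule real_cond_exp_pos) (auto simp: dens_nonneg)
  ultimately show ?thesis by eventually_elim auto
qed

lemma emeasure_stable_on_C:
  assumes "A \<in> sets C"
  shows "emeasure Q A = emeasure M A"
proof -
  interpret sigma_finite_subalgebra M C by (rule sigma_finite_subalgebra_C)
  interpret Q: prob_space Q using Reps_D(1)[OF Q] .
  let ?g = "cond_dens P"
  have A_M [measurable]: "A \<in> sets M" using assms subalgebra_C by (auto simp: subalgebra_def)
  have A_Q: "A \<in> sets Q" using A_M Reps_D(2)[OF Q] by simp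
  have "measure Q A = (\<integral>x. dens M Q x * indicator A x \<partial>M)"
    using integral_Reps[OF Q, of "indicator A"] A_Q by simp
  also have "\<dots> = (\<integral>x. (indicator A x * inverse (?g x)) * dens M P x \<partial>M)"
    by (rule integral_cong_AE) (use dens_stable_AE in auto)
  also have "\<dots> = (\<integral>x. (indicator A x * inverse (?g x)) * ?g x \<partial>M)"
    unfolding cond_dens_def
    by (rule real_cond_exp_intg(2)[symmetric])
       (use integrable_mult_indicator[OF A_M integrable_inverse_cond_dens_mult] assms in
        \<open>auto simp: cond_dens_def mult.assoc\<close>)
  also have "\<dots> = measure M A"
    using cond_dens_pos by (subst integral_cong_AE[where g="indicator A"]) auto
  finally show ?thesis using A_M A_Q by (simp add: emeasure_eq_measure Q.emeasure_eq_measure)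
qed

lemma integrable_stable_on_C:
  fixes h :: "'a \<Rightarrow> real"
  assumes [measurable]: "h \<in> borel_measurable C" and "integrable Q h"
  shows "integrable M h"
proof -
  have "restr_to_subalg Q C = restr_to_subalg M C"
    by (rule measure_eqI)
       (auto simp: sets_restr_to_subalg[OF subalgebra_C] sets_restr_to_subalg[OF subalgebra_Reps[OF Q]]
         emeasure_restr_to_subalg[OF subalgebra_C] emeasure_restr_to_subalg[OF subalgebra_Reps[OF Q]]
         emeasure_stable_on_C)
  moreover have "integrable (restr_to_subalg Q C) h"
    by (rule integrable_in_subalg[OF subalgebra_Reps[OF Q]]) (use assms in auto)
  ultimately show ?thesis by (intro integrable_from_subalg[OF subalgebra_C]) simp
qed

text \<open>Conditional Jensen under Q, then transfer to M, which agrees with Q on C.\<close>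
lemma cond_exp_stable_in_L\<^sub>C: "real_cond_exp Q C \<xi> \<in> L\<^sub>C"
proof -
  interpret QC: sigma_finite_subalgebra Q C by (rule sigma_finite_subalgebra_Reps[OF Q])
  have [measurable]: "\<xi> \<in> borel_measurable Q" by (rule measurable_Reps[OF Q xi_measurable])
  have xi_Q: "integrable Q \<xi>" using Q xi_in_L by (simp add: rep_set_def)
  have "(\<lambda>x. \<bar>\<xi> x\<bar> powr (2 + \<epsilon>)) \<in> Lp M ((4 + 2 * \<epsilon>) / (2 + \<epsilon>))"
    by (rule Lp_abs_powr[OF _ xi_L]) (use eps_pos in auto)
  moreover have "(4 + 2 * \<epsilon>) / (2 + \<epsilon>) = 2" using eps_pos by (simp add: field_simps)
  ultimately have "(\<lambda>x. \<bar>\<xi> x\<bar> powr (2 + \<epsilon>)) \<in> Lp M r"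
    using Lp_mono[OF finite_measure_axioms, of r 2] eps_pos eps_less_1 by simp
  then have xi_powr_Q: "integrable Q (\<lambda>x. \<bar>\<xi> x\<bar> powr (2 + \<epsilon>))"
    using integrable_mult_conjugate_Lp[OF conjugate_exponents dens_in_Lq[OF Q]] integrable_Reps[OF Q]
    by simp
  have "integrable Q (\<lambda>x. \<bar>real_cond_exp Q C \<xi> x\<bar> powr (2 + \<epsilon>))"
    by (rule QC.integrable_convex_cond_exp[where I=UNIV, OF xi_Q _ _ xi_powr_Q convex_on_abs_powr])
       (use eps_pos in auto)
  then have "integrable M (\<lambda>x. \<bar>real_cond_exp Q C \<xi> x\<bar> powr (2 + \<epsilon>))"
    by (intro integrable_stable_on_C) auto
  then show ?thesis by (simp add: Lp_sub_def Lp_def measurable_C_imp_M)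
qed

lemma integral_dens_mult_cond_exp_stable:
  assumes [measurable]: "k \<in> borel_measurable C" and "k \<in> L"
  shows "(\<integral>x. dens M P x * (\<xi> x * k x) \<partial>M) =
    (\<integral>x. dens M P x * (real_cond_exp Q C \<xi> x * k x) \<partial>M)"
proof -
  interpret QC: sigma_finite_subalgebra Q C by (rule sigma_finite_subalgebra_Reps[OF Q])
  let ?m = "real_cond_exp Q C \<xi>" and ?g = "cond_dens P"
  have [measurable]: "k \<in> borel_measurable M" by (rule measurable_C_imp_M) simp
  have [measurable]: "?m \<in> borel_measurable M" by (rule measurable_C_imp_M) simp
  have [measurable]: "\<xi> \<in> borel_measurable Q" by (rule measurable_Reps[OF Q xi_measurable])
  have dens_P: "AE x in M. dens M P x = ?g x * dens M Q x"
    using cond_dens_pos dens_stable_AE by eventually_elim auto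
  have "(\<integral>x. dens M P x * (\<xi> x * k x) \<partial>M) = (\<integral>x. dens M Q x * ((?g x * k x) * \<xi> x) \<partial>M)"
    by (rule integral_cong_AE) (use dens_P in auto)
  also have "\<dots> = (\<integral>x. (?g x * k x) * \<xi> x \<partial>Q)"
    by (rule integral_Reps[OF Q, symmetric]) simp
  also have "\<dots> = (\<integral>x. (?g x * k x) * ?m x \<partial>Q)"
  proof -
    have "integrable M (\<lambda>x. dens M Q x * ((?g x * k x) * \<xi> x))"
      by (rule integrable_cong_AE_imp[OF integrable_dens_mult[OF P xi_in_L assms(2)]])
         (use dens_P in auto)
    then have "integrable Q (\<lambda>x. (?g x * k x) * \<xi> x)" by (simp add: integrable_Reps[OF Q])
    then show ?thesis by (intro QC.real_cond_exp_intg(2)[symmetric]) auto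
  qed
  also have "\<dots> = (\<integral>x. dens M Q x * ((?g x * k x) * ?m x) \<partial>M)"
    by (rule integral_Reps[OF Q]) simp
  also have "\<dots> = (\<integral>x. dens M P x * (?m x * k x) \<partial>M)"
    by (rule integral_cong_AE) (use dens_P in auto)
  finally show ?thesis .
qed

lemma pythagorean_centre_stable: "pythagorean_centre P (real_cond_exp Q C \<xi>) (cond_dens P)"
  unfolding pythagorean_centre_def
proof (intro conjI ballI)
  let ?m = "real_cond_exp Q C \<xi>"
  show m_L\<^sub>C: "?m \<in> L\<^sub>C" by (rule cond_exp_stable_in_L\<^sub>C)
  show "cond_dens P \<in> borel_measurable M" by simp
  show "AE x in M. 0 < cond_dens P x" by (rule cond_dens_pos)
  fix \<eta> assume \<eta>: "\<eta> \<in> L\<^sub>C"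
  have [measurable]: "?m \<in> borel_measurable C" "\<eta> \<in> borel_measurable C"
    using L\<^sub>C_D(2) m_L\<^sub>C \<eta> by auto
  define k where "k x = ?m x - \<eta> x" for x
  have k_C [measurable]: "k \<in> borel_measurable C" unfolding k_def by measurable
  have k_L: "k \<in> L" unfolding k_def by (rule L_diff[OF L\<^sub>C_D(1)[OF m_L\<^sub>C] L\<^sub>C_D(1)[OF \<eta>]])
  have int_kk: "integrable M (\<lambda>x. dens M P x * (k x * k x))"
    by (rule integrable_dens_mult[OF P k_L k_L])
  show "integrable M (\<lambda>x. cond_dens P x * (?m x - \<eta> x)\<^sup>2)"
    using integrable_cond_dens_mult[OF _ int_kk] by (simp add: k_def power2_eq_square)
  have "risk P \<eta> = (\<integral>x. dens M P x * (\<xi> x - \<eta> x)\<^sup>2 \<partial>M)"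
    by (rule risk_eq_integral_dens[OF P L\<^sub>C_D(1)[OF \<eta>]])
  also have "\<dots> = (\<integral>x. dens M P x * (\<xi> x - ?m x)\<^sup>2 +
      2 * (dens M P x * (\<xi> x * k x) - dens M P x * (?m x * k x)) + dens M P x * (k x * k x) \<partial>M)"
    by (rule Bochner_Integration.integral_cong) (auto simp: k_def power2_eq_square algebra_simps)
  also have "\<dots> = (\<integral>x. dens M P x * (\<xi> x - ?m x)\<^sup>2 \<partial>M) +
      2 * ((\<integral>x. dens M P x * (\<xi> x * k x) \<partial>M) - (\<integral>x. dens M P x * (?m x * k x) \<partial>M)) +
      (\<integral>x. dens M P x * (k x * k x) \<partial>M)"
    using integrable_dens_sq_diff[OF P L\<^sub>C_D(1)[OF m_L\<^sub>C]] integrable_dens_mult[OF P xi_in_L k_L]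
      integrable_dens_mult[OF P L\<^sub>C_D(1)[OF m_L\<^sub>C] k_L] int_kk
    by simp
  also have "\<dots> = risk P ?m + (\<integral>x. cond_dens P x * (k x * k x) \<partial>M)"
    using integral_dens_mult_cond_exp_stable[OF k_C k_L] integral_cond_dens_mult[OF _ int_kk]
      risk_eq_integral_dens[OF P L\<^sub>C_D(1)[OF m_L\<^sub>C]]
    by simp
  finally show "risk P \<eta> = risk P ?m + (\<integral>x. cond_dens P x * (?m x - \<eta> x)\<^sup>2 \<partial>M)"
    by (simp add: k_def power2_eq_square)
qed

end

lemma pythagorean_centre_exists:
  assumes "P \<in> Reps"
  shows "\<exists>m g. pythagorean_centre P m g"
proof -
  obtain Q where "Q \<in> Reps" "AE x in M. dens M Q x = dens M P x / cond_dens P x"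
    using stable assms unfolding stable_def cond_dens_def by blast
  then show ?thesis using pythagorean_centre_stable[OF assms] by blast
qed

lemma pythagorean_centreD:
  assumes "pythagorean_centre P m g"
  shows "m \<in> L\<^sub>C" "m \<in> borel_measurable M" "g \<in> borel_measurable M" "AE x in M. 0 < g x"
    and "\<eta> \<in> L\<^sub>C \<Longrightarrow> integrable M (\<lambda>x. g x * (m x - \<eta> x)\<^sup>2)"
    and "\<eta> \<in> L\<^sub>C \<Longrightarrow> risk P \<eta> = risk P m + (\<integral>x. g x * (m x - \<eta> x)\<^sup>2 \<partial>M)"
proof -
  show m: "m \<in> L\<^sub>C" using assms by (simp add: pythagorean_centre_def)
  then show "m \<in> borel_measurable M" by (rule L\<^sub>C_D(3))
  show "g \<in> borel_measurable M" "AE x in M. 0 < g x"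
    using assms by (simp_all add: pythagorean_centre_def)
  show "integrable M (\<lambda>x. g x * (m x - \<eta> x)\<^sup>2)"
    and "risk P \<eta> = risk P m + (\<integral>x. g x * (m x - \<eta> x)\<^sup>2 \<partial>M)" if "\<eta> \<in> L\<^sub>C"
    using assms that unfolding pythagorean_centre_def by blast+
qed

lemma risk_centre_le:
  assumes "pythagorean_centre P m g" "\<eta> \<in> L\<^sub>C"
  shows "risk P m \<le> risk P \<eta>"
proof -
  note centre = pythagorean_centreD[OF assms(1)]
  have "0 \<le> (\<integral>x. g x * (m x - \<eta> x)\<^sup>2 \<partial>M)"
    using centre(4) by (intro integral_nonneg_AE) (auto elim!: eventually_mono)
  then show ?thesis using centre(6)[OF assms(2)] by linarith
qed

lemma min_risk_eq_risk_centre: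
  assumes "pythagorean_centre P m g"
  shows "min_risk P = risk P m"
proof (rule antisym)
  show "min_risk P \<le> risk P m" by (rule min_risk_le_risk[OF pythagorean_centreD(1)[OF assms]])
  show "risk P m \<le> min_risk P"
    unfolding min_risk_def using risk_centre_le[OF assms] zero_in_L\<^sub>C by (intro cINF_greatest) auto
qed

lemma
  assumes "P1 \<in> Reps" "P2 \<in> Reps" "0 \<le> t" "t \<le> 1"
  shows mixture_in_Reps: "density M (\<lambda>x. ennreal ((1 - t) * dens M P1 x + t * dens M P2 x)) \<in> Reps"
    and risk_mixture: "\<eta> \<in> L \<Longrightarrow>
      risk (density M (\<lambda>x. ennreal ((1 - t) * dens M P1 x + t * dens M P2 x))) \<eta> =
        (1 - t) * risk P1 \<eta> + t * risk P2 \<eta>"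
proof -
  have d1: "density M (\<lambda>x. ennreal (dens M P1 x)) = P1" by (rule Reps_density[OF assms(1), symmetric])
  have d2: "density M (\<lambda>x. ennreal (dens M P2 x)) = P2" by (rule Reps_density[OF assms(2), symmetric])
  show "density M (\<lambda>x. ennreal ((1 - t) * dens M P1 x + t * dens M P2 x)) \<in> Reps"
    by (rule density_mixture_in_rep_set) (simp_all add: d1 d2 assms dens_nonneg)
  assume "\<eta> \<in> L"
  then have [measurable]: "\<eta> \<in> borel_measurable M" by (rule L_measurable)
  have "integrable P1 (\<lambda>x. (\<xi> x - \<eta> x)\<^sup>2)" "integrable P2 (\<lambda>x. (\<xi> x - \<eta> x)\<^sup>2)"
    using integrable_dens_sq_diff[OF _ \<open>\<eta> \<in> L\<close>] assms(1,2) by (simp_all add: integrable_Reps)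
  then show "risk (density M (\<lambda>x. ennreal ((1 - t) * dens M P1 x + t * dens M P2 x))) \<eta> =
      (1 - t) * risk P1 \<eta> + t * risk P2 \<eta>"
    unfolding risk_def using integral_density_mixture[of "dens M P1" M "dens M P2"] assms(3,4)
    by (simp add: d1 d2 dens_nonneg)
qed

lemma risk_mixture_bound:
  assumes Ps: "Ps \<in> Reps" "\<forall>P\<in>Reps. min_risk P \<le> min_risk Ps"
    and centre_Ps: "pythagorean_centre Ps a gs"
    and P: "P \<in> Reps" and centre_P: "pythagorean_centre P b g"
    and t: "0 < t" "t < 1"
  shows "risk P b + (\<integral>x. mixture_weight t (gs x) (g x) * (b x - a x)\<^sup>2 \<partial>M) \<le> risk Ps a"
proof -
  let ?Pt = "density M (\<lambda>x. ennreal ((1 - t) * dens M Ps x + t * dens M P x))"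
  let ?w = "\<lambda>x. mixture_weight t (gs x) (g x) * (b x - a x)\<^sup>2"
  note centre_a = pythagorean_centreD[OF centre_Ps] and centre_b = pythagorean_centreD[OF centre_P]
  note [measurable] = centre_a(2,3) centre_b(2,3)
  have Pt: "?Pt \<in> Reps" by (rule mixture_in_Reps) (use Ps P t in auto)
  have int_w: "integrable M ?w"
    using centre_b(4) centre_b(5)[OF centre_a(1)] t
    by (intro integrable_mixture_weight[OF _ _ _ centre_a(4)]) (auto elim!: eventually_mono)
  have "(1 - t) * risk Ps a + t * (risk P b + integral\<^sup>L M ?w) \<le> risk ?Pt \<eta>" if \<eta>: "\<eta> \<in> L\<^sub>C" for \<eta>
  proof -
    have [measurable]: "\<eta> \<in> borel_measurable M" using \<eta> by (rule L\<^sub>C_D(3))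
    have sq: "(\<lambda>x. mixture_weight t (gs x) (g x) * (a x - \<eta> x - (b x - \<eta> x))\<^sup>2) = ?w"
      by (intro ext) (simp add: power2_eq_square algebra_simps)
    have "t * integral\<^sup>L M ?w \<le>
        (1 - t) * (\<integral>x. gs x * (a x - \<eta> x)\<^sup>2 \<partial>M) + t * (\<integral>x. g x * (b x - \<eta> x)\<^sup>2 \<partial>M)"
      using integral_mixture_weight_le[of gs M g "\<lambda>x. a x - \<eta> x" "\<lambda>x. b x - \<eta> x" t]
        centre_a(4) centre_a(5)[OF \<eta>] centre_b(4) centre_b(5)[OF \<eta>] int_w t
      unfolding sq by simp
    moreover have "risk ?Pt \<eta> = (1 - t) * risk Ps \<eta> + t * risk P \<eta>"
      by (rule risk_mixture[OF Ps(1) P _ _ L\<^sub>C_D(1)[OF \<eta>]]) (use t in auto)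
    ultimately show ?thesis using centre_a(6)[OF \<eta>] centre_b(6)[OF \<eta>] by (simp add: distrib_left)
  qed
  then have "(1 - t) * risk Ps a + t * (risk P b + integral\<^sup>L M ?w) \<le> min_risk ?Pt"
    unfolding min_risk_def using zero_in_L\<^sub>C by (intro cINF_greatest) auto
  also have "\<dots> \<le> min_risk Ps" using Ps(2) Pt by blast
  also have "\<dots> = risk Ps a" by (rule min_risk_eq_risk_centre[OF centre_Ps])
  finally have "t * (risk P b + integral\<^sup>L M ?w) \<le> t * risk Ps a" by (simp add: left_diff_distrib)
  then show ?thesis using t by simp
qed

lemma risk_le_risk_at_maximiser:
  assumes Ps: "Ps \<in> Reps" "\<forall>P\<in>Reps. min_risk P \<le> min_risk Ps"
    and centre_Ps: "pythagorean_centre Ps a gs" and P: "P \<in> Reps"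
  shows "risk P a \<le> risk Ps a"
proof -
  obtain b g where centre_P: "pythagorean_centre P b g" using pythagorean_centre_exists[OF P] by blast
  note centre_a = pythagorean_centreD[OF centre_Ps] and centre_b = pythagorean_centreD[OF centre_P]
  note [measurable] = centre_a(2,3) centre_b(2,3)
  have "risk P b + (\<integral>x. g x * (b x - a x)\<^sup>2 \<partial>M) \<le> risk Ps a"
  proof (rule tendsto_upperbound)
    show "((\<lambda>t. risk P b + (\<integral>x. mixture_weight t (gs x) (g x) * (b x - a x)\<^sup>2 \<partial>M)) \<longlongrightarrow>
        risk P b + (\<integral>x. g x * (b x - a x)\<^sup>2 \<partial>M)) (at_right 0)"
      using centre_b(4) centre_b(5)[OF centre_a(1)]
      by (intro tendsto_add tendsto_const tendsto_integral_mixture_weight[OF _ _ _ centre_a(4)])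
         (auto elim!: eventually_mono)
    show "\<forall>\<^sub>F t in at_right 0.
        risk P b + (\<integral>x. mixture_weight t (gs x) (g x) * (b x - a x)\<^sup>2 \<partial>M) \<le> risk Ps a"
      using eventually_at_right_real[OF zero_less_one]
    proof eventually_elim
      case (elim t)
      then show ?case by (intro risk_mixture_bound[OF Ps centre_Ps P centre_P]) auto
    qed
  qed simp
  then show ?thesis using centre_b(6)[OF centre_a(1)] by simp
qed

lemma saddle_point_exists:
  "\<exists>Ps\<in>Reps. \<exists>a\<in>L\<^sub>C. (\<forall>P\<in>Reps. risk P a \<le> risk Ps a) \<and> (\<forall>\<eta>\<in>L\<^sub>C. risk Ps a \<le> risk Ps \<eta>)"
proof -
  obtain Ps where Ps: "Ps \<in> Reps" "\<forall>P\<in>Reps. min_risk P \<le> min_risk Ps"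
    using min_risk_attains_max by blast
  obtain a gs where centre: "pythagorean_centre Ps a gs"
    using pythagorean_centre_exists[OF Ps(1)] by blast
  show ?thesis
    using Ps(1) pythagorean_centreD(1)[OF centre] risk_le_risk_at_maximiser[OF Ps centre]
      risk_centre_le[OF centre] by blast
qed

end

theorem theorem3:
  fixes M C :: "'a measure" and \<epsilon> :: real and \<rho> :: "('a \<Rightarrow> real) \<Rightarrow> real" and \<xi> :: "'a \<Rightarrow> real"
  assumes "prob_space M" and "complete_measure M"
    and "0 < \<epsilon>" and "\<epsilon> < 1"
    and "subalgebra M C"
    and "sublinear_operator M (2 + \<epsilon>) \<rho>"
    and "\<forall>\<zeta>\<in>Lp M (2 + \<epsilon>). \<exists>P\<in>rep_set M (2 + \<epsilon>) \<rho>. (\<integral>x. \<zeta> x \<partial>P) = \<rho> \<zeta>"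
    and "\<forall>P\<in>rep_set M (2 + \<epsilon>) \<rho>. absolutely_continuous M P \<and> absolutely_continuous P M"
    and "\<forall>P\<in>rep_set M (2 + \<epsilon>) \<rho>. dens M P \<in> Lp M (1 + 2 / \<epsilon>)"
    and "\<exists>B. \<forall>P\<in>rep_set M (2 + \<epsilon>) \<rho>. (\<integral>x. \<bar>dens M P x\<bar> powr (1 + 2 / \<epsilon>) \<partial>M) \<le> B"
    and "compactin (weak_Lp_topology M (1 + 2 / \<epsilon>) (1 + \<epsilon> / 2))
           (dens M ` rep_set M (2 + \<epsilon>) \<rho>)"
    and "\<xi> \<in> Lp M (4 + 2 * \<epsilon>)"
    and "stable M C (rep_set M (2 + \<epsilon>) \<rho>)"
  shows "\<exists>\<eta>h\<in>Lp_sub M C (2 + \<epsilon>).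
           rho_sq (rep_set M (2 + \<epsilon>) \<rho>) \<xi> \<eta>h =
           (INF \<eta>\<in>Lp_sub M C (2 + \<epsilon>). rho_sq (rep_set M (2 + \<epsilon>) \<rho>) \<xi> \<eta>)"
proof -
  interpret sublinear_least_squares M C \<epsilon> \<rho> \<xi>
    using assms unfolding sublinear_least_squares_def sublinear_least_squares_axioms_def by blast
  obtain Ps a where "Ps \<in> Reps" "a \<in> L\<^sub>C"
    and "\<forall>P\<in>Reps. risk P a \<le> risk Ps a" "\<forall>\<eta>\<in>L\<^sub>C. risk Ps a \<le> risk Ps \<eta>"
    using saddle_point_exists by blast
  then have "(SUP P\<in>Reps. risk P a) = (INF \<eta>\<in>L\<^sub>C. SUP P\<in>Reps. risk P \<eta>)"
    by (intro saddle_point_minimises_sup) (auto intro: risk_bdd_above L\<^sub>C_D(1))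
  then show ?thesis using \<open>a \<in> L\<^sub>C\<close> unfolding rho_sq_eq_SUP_risk by blast
qed

end
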